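(* Let $V$ be a reflexive Banach space, $1<p<\infty$, and let $W$ be a Banach space compactly embedded in $V$. If $g\in L^p_b(\mathbb R,W)$, then $g$ is space regular as a function in $L^p_b(\mathbb R,V)$.
   Context: $L^p_b(\mathbb R,X)$ has norm $\sup_{s\in\mathbb R}\|g\|_{L^p((s,s+1),X)}$. A function $g\in L^p_b(\mathbb R,V)$ is space regular if for every $\varepsilon>0$ there exist a finite-dimensional subspace $V_\varepsilon\subset V$ and $g_\varepsilon\in L^p_b(\mathbb R,V_\varepsilon)$ with $\|g-g_\varepsilon\|_{L^p_b(\mathbb R,V)}\le\varepsilon$. *)

theory Defs
  imports "HOL-Analysis.Analysis"
begin

definition reflexive_space :: "'a::real_normed_vector itself \<Rightarrow> bool" where
  "reflexive_space TYPE('a) \<longleftrightarrow>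
     (\<forall>\<phi> :: ('a \<Rightarrow>\<^sub>L real) \<Rightarrow>\<^sub>L real. \<exists>v::'a. \<forall>f. blinfun_apply \<phi> f = blinfun_apply f v)"

definition compact_embedding :: "('w::real_normed_vector \<Rightarrow> 'v::real_normed_vector) \<Rightarrow> bool" where
  "compact_embedding i \<longleftrightarrow> bounded_linear i \<and> inj i \<and>
     (\<forall>B. bounded B \<longrightarrow> compact (closure (i ` B)))"

definition strongly_measurable :: "(real \<Rightarrow> 'a::real_normed_vector) \<Rightarrow> bool" where
  "strongly_measurable g \<longleftrightarrow>
     (\<exists>s :: nat \<Rightarrow> real \<Rightarrow> 'a. (\<forall>n. simple_function lebesgue (s n)) \<and>
        (AE x in lebesgue. (\<lambda>n. s n x) \<longlonglongrightarrow> g x))"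

definition Lpb_pnorm :: "real \<Rightarrow> (real \<Rightarrow> 'a::real_normed_vector) \<Rightarrow> ennreal" where
  "Lpb_pnorm p g = (SUP s::real. \<integral>\<^sup>+ x \<in> {s<..<s+1}. ennreal (norm (g x) powr p) \<partial>lebesgue)"

definition Lpb :: "real \<Rightarrow> (real \<Rightarrow> 'a::real_normed_vector) \<Rightarrow> bool" where
  "Lpb p g \<longleftrightarrow> strongly_measurable g \<and> Lpb_pnorm p g < \<infinity>"

text \<open>Space regularity in L^p_b(R,V); the condition norm(g - g_eps) <= eps is
  expressed as (p-th power of norm) <= eps^p.\<close>
definition space_regular :: "real \<Rightarrow> (real \<Rightarrow> 'a::real_normed_vector) \<Rightarrow> bool" where
  "space_regular p g \<longleftrightarrow> Lpb p g \<and>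
     (\<forall>\<epsilon>>0. \<exists>S :: 'a set. \<exists>g\<epsilon> :: real \<Rightarrow> 'a.
        subspace S \<and> (\<exists>B. finite B \<and> S = span B) \<and>
        Lpb p g\<epsilon> \<and> (\<forall>x. g\<epsilon> x \<in> S) \<and>
        Lpb_pnorm p (\<lambda>x. g x - g\<epsilon> x) \<le> ennreal (\<epsilon> powr p))"

end

theory Submission
  imports Defs
begin

text \<open>A compact embedding \<open>i\<close> can be approximated, uniformly on the unit sphere, by continuous maps
  into finite-dimensional subspaces: cover the compact closure of the image of the sphere by finitely
  many \<open>\<delta>\<close>-balls and glue their centres with a partition of unity (a Schauder projection), extended
  positively homogeneously. Composing \<open>g\<close> with such a map \<open>F\<close> gives a strongly measurable function with
  values in a finite-dimensional space, and \<open>\<parallel>i (g t) - F (g t)\<parallel> \<le> \<delta> \<parallel>g t\<parallel>\<close> pointwise, so the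
  \<open>L\<^sup>p\<^sub>b\<close> distance is at most \<open>\<delta>\<close> times the \<open>L\<^sup>p\<^sub>b\<close> norm of \<open>g\<close>.\<close>

lemma strongly_measurable_imp_borel_measurable:
  fixes g :: "real \<Rightarrow> 'a::real_normed_vector"
  assumes "strongly_measurable g"
  shows "g \<in> borel_measurable lebesgue"
proof -
  obtain s where s: "\<And>n. simple_function lebesgue (s n)"
    and ae: "AE x in lebesgue. (\<lambda>n. s n x) \<longlonglongrightarrow> g x"
    using assms unfolding strongly_measurable_def by blast
  obtain N where sub: "{x\<in>space lebesgue. \<not> (\<lambda>n. s n x) \<longlonglongrightarrow> g x} \<subseteq> N"
    and N0: "emeasure lebesgue N = 0" and Nm: "N \<in> sets lebesgue"
    by (rule AE_E[OF ae])
  define h where "h x = (if x \<in> N then 0 else g x)" for x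
  have hm: "h \<in> borel_measurable lebesgue"
  proof (rule borel_measurable_LIMSEQ_metric)
    show "(\<lambda>x. if x \<in> N then 0 else s n x) \<in> borel_measurable lebesgue" for n
      using s[of n] Nm by (intro measurable_If_set borel_measurable_simple_function) auto
    show "(\<lambda>n. if x \<in> N then 0 else s n x) \<longlonglongrightarrow> h x" if "x \<in> space lebesgue" for x
      using sub that by (auto simp: h_def)
  qed
  show ?thesis
  proof (rule measurableI)
    fix A :: "'a set" assume A: "A \<in> sets borel"
    have "g -` A \<inter> space lebesgue = ((h -` A \<inter> space lebesgue) - N) \<union> (g -` A \<inter> N)"
      by (auto simp: h_def)
    moreover have "(h -` A \<inter> space lebesgue) - N \<in> sets lebesgue"
      using measurable_sets[OF hm A] Nm by (intro sets.Diff) auto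
    moreover have "g -` A \<inter> N \<in> sets lebesgue"
      using completion.complete[of "g -` A \<inter> N" N lborel] N0 Nm by (auto simp: null_sets_def)
    ultimately show "g -` A \<inter> space lebesgue \<in> sets lebesgue" by (metis sets.Un)
  qed auto
qed

lemma strongly_measurable_compose:
  fixes g :: "real \<Rightarrow> 'a::real_normed_vector" and F :: "'a \<Rightarrow> 'b::real_normed_vector"
  assumes "strongly_measurable g" and "continuous_on UNIV F"
  shows "strongly_measurable (\<lambda>x. F (g x))"
proof -
  obtain s where s: "\<And>n. simple_function lebesgue (s n)"
    and ae: "AE x in lebesgue. (\<lambda>n. s n x) \<longlonglongrightarrow> g x"
    using assms(1) unfolding strongly_measurable_def by blast
  have cont: "isCont F y" for y
    using assms(2) by (simp add: continuous_on_eq_continuous_at)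
  have "AE x in lebesgue. (\<lambda>n. F (s n x)) \<longlonglongrightarrow> F (g x)"
    using ae
  proof eventually_elim
    case (elim x)
    then show ?case by (rule isCont_tendsto_compose[OF cont])
  qed
  moreover have "simple_function lebesgue (\<lambda>x. F (s n x))" for n
    using s by (rule simple_function_compose1)
  ultimately show ?thesis
    unfolding strongly_measurable_def by (intro exI[of _ "\<lambda>n x. F (s n x)"]) simp
qed

lemma Lpb_pnorm_mono:
  fixes f :: "real \<Rightarrow> 'a::real_normed_vector" and g :: "real \<Rightarrow> 'b::real_normed_vector"
  assumes p: "p \<ge> 0" and c: "c \<ge> 0" and g: "g \<in> borel_measurable lebesgue"
    and le: "\<And>x. norm (f x) \<le> c * norm (g x)"
  shows "Lpb_pnorm p f \<le> ennreal (c powr p) * Lpb_pnorm p g"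
  unfolding Lpb_pnorm_def
proof (rule SUP_least)
  fix s :: real
  have "norm (f x) powr p \<le> c powr p * norm (g x) powr p" for x
    using powr_mono2[OF p _ le[of x]] c by (simp add: powr_mult)
  then have "(\<integral>\<^sup>+ x \<in> {s<..<s+1}. ennreal (norm (f x) powr p) \<partial>lebesgue)
      \<le> (\<integral>\<^sup>+ x. ennreal (c powr p) * (ennreal (norm (g x) powr p) * indicator {s<..<s+1} x) \<partial>lebesgue)"
    by (intro nn_integral_mono)
       (auto split: split_indicator simp: ennreal_mult'[symmetric] intro: ennreal_leI)
  also have "\<dots> = ennreal (c powr p) * (\<integral>\<^sup>+ x \<in> {s<..<s+1}. ennreal (norm (g x) powr p) \<partial>lebesgue)"
  proof (intro nn_integral_cmult)
    have [measurable]: "{s<..<s+1} \<in> sets lebesgue" by simp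
    show "(\<lambda>x. ennreal (norm (g x) powr p) * indicator {s<..<s+1} x) \<in> borel_measurable lebesgue"
      using g by measurable
  qed
  also have "\<dots> \<le> ennreal (c powr p) *
      (SUP s::real. \<integral>\<^sup>+ x \<in> {s<..<s+1}. ennreal (norm (g x) powr p) \<partial>lebesgue)"
    by (intro mult_left_mono SUP_upper) auto
  finally show "(\<integral>\<^sup>+ x \<in> {s<..<s+1}. ennreal (norm (f x) powr p) \<partial>lebesgue)
      \<le> ennreal (c powr p) * (SUP s::real. \<integral>\<^sup>+ x \<in> {s<..<s+1}. ennreal (norm (g x) powr p) \<partial>lebesgue)" .
qed

lemma Lpb_dominated:
  fixes g :: "real \<Rightarrow> 'a::real_normed_vector" and h :: "real \<Rightarrow> 'b::real_normed_vector"
  assumes "p \<ge> 0" "Lpb p g" "strongly_measurable h" "c \<ge> 0" "\<And>x. norm (h x) \<le> c * norm (g x)"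
  shows "Lpb p h"
proof -
  have "Lpb_pnorm p h \<le> ennreal (c powr p) * Lpb_pnorm p g"
    using assms strongly_measurable_imp_borel_measurable
    by (intro Lpb_pnorm_mono) (auto simp: Lpb_def)
  also have "\<dots> < \<infinity>"
    using assms(2) by (simp add: Lpb_def ennreal_mult_less_top)
  finally show ?thesis
    using assms(3) by (simp add: Lpb_def)
qed

lemma compact_embedding_finite_net:
  fixes i :: "'w::real_normed_vector \<Rightarrow> 'v::real_normed_vector"
  assumes "compact_embedding i" and "\<delta> > 0"
  obtains V0 where "finite V0" "\<And>w. w \<noteq> 0 \<Longrightarrow> \<exists>v\<in>V0. norm (i w - norm w *\<^sub>R v) < \<delta> * norm w"
proof -
  interpret i: bounded_linear i
    using assms(1) by (simp add: compact_embedding_def)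
  define K where "K = closure (i ` sphere 0 1)"
  have "compact K"
    using assms(1) bounded_subset[OF bounded_cball sphere_cball]
    unfolding K_def compact_embedding_def by blast
  moreover have "K \<subseteq> (\<Union>v\<in>K. ball v \<delta>)"
    using assms(2) by auto
  ultimately obtain V0 where fin: "finite V0" and cover: "K \<subseteq> (\<Union>v\<in>V0. ball v \<delta>)"
    by (metis compactE_image open_ball)
  have "\<exists>v\<in>V0. norm (i w - norm w *\<^sub>R v) < \<delta> * norm w" if "w \<noteq> 0" for w
  proof -
    define u where "u = w /\<^sub>R norm w"
    have "i u \<in> K"
      using that unfolding K_def u_def by (intro closure_subset[THEN subsetD]) auto
    then obtain v where v: "v \<in> V0" "norm (i u - v) < \<delta>"
      using cover by (auto simp: dist_norm norm_minus_commute)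
    have "i w - norm w *\<^sub>R v = norm w *\<^sub>R (i u - v)"
      using that by (simp add: u_def i.scaleR algebra_simps)
    then have "norm (i w - norm w *\<^sub>R v) = norm w * norm (i u - v)"
      by simp
    also have "\<dots> < \<delta> * norm w"
      using v that by simp
    finally show ?thesis
      using v(1) by blast
  qed
  then show ?thesis
    using fin that by blast
qed

text \<open>A partition of unity subordinate to the cover of the image of the unit sphere by the balls
  \<open>ball v \<delta>\<close>, \<open>v \<in> V0\<close>, made positively homogeneous of degree one.\<close>

locale schauder_net =
  fixes i :: "'w::real_normed_vector \<Rightarrow> 'v::real_normed_vector" and \<delta> :: real and V0 :: "'v set"
  assumes bounded_linear_i: "bounded_linear i" and finite_net: "finite V0"
    and net: "\<And>w. w \<noteq> 0 \<Longrightarrow> \<exists>v\<in>V0. norm (i w - norm w *\<^sub>R v) < \<delta> * norm w"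
begin

definition weight :: "'v \<Rightarrow> 'w \<Rightarrow> real" where
  "weight v w = max 0 (\<delta> * norm w - norm (i w - norm w *\<^sub>R v))"

definition total_weight :: "'w \<Rightarrow> real" where
  "total_weight w = (\<Sum>v\<in>V0. weight v w)"

definition proj :: "'w \<Rightarrow> 'v" where
  "proj w = (\<Sum>v\<in>V0. (weight v w * norm w / total_weight w) *\<^sub>R v)"

lemma weight_nonneg: "weight v w \<ge> 0"
  by (simp add: weight_def)

lemma total_weight_pos:
  assumes "w \<noteq> 0"
  shows "total_weight w > 0"
proof -
  obtain v where "v \<in> V0" "weight v w > 0"
    using net[OF assms] by (auto simp: weight_def)
  then show ?thesis
    unfolding total_weight_def using finite_net weight_nonneg by (intro sum_pos2) auto
qed

lemma proj_coefficient_bounds: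
  assumes "v \<in> V0"
  shows "0 \<le> weight v w * norm w / total_weight w" "weight v w * norm w / total_weight w \<le> norm w"
proof -
  have "weight v w \<le> total_weight w"
    unfolding total_weight_def using finite_net assms weight_nonneg by (intro member_le_sum) auto
  then have "weight v w / total_weight w \<le> 1"
    by (cases "w = 0") (auto simp: weight_def dest: total_weight_pos)
  from mult_right_mono[OF this norm_ge_zero[of w]]
  show "weight v w * norm w / total_weight w \<le> norm w"
    by simp
  show "0 \<le> weight v w * norm w / total_weight w"
    by (simp add: total_weight_def sum_nonneg weight_nonneg)
qed

lemma proj_in_span: "proj w \<in> span V0"
  unfolding proj_def by (intro span_sum span_scale span_base)

lemma norm_proj_le: "norm (proj w) \<le> (\<Sum>v\<in>V0. norm v) * norm w"
proof -
  have "norm (proj w) \<le> (\<Sum>v\<in>V0. norm ((weight v w * norm w / total_weight w) *\<^sub>R v))"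
    unfolding proj_def by (rule norm_sum)
  also have "\<dots> \<le> (\<Sum>v\<in>V0. norm w * norm v)"
  proof (intro sum_mono)
    fix v assume v: "v \<in> V0"
    show "norm ((weight v w * norm w / total_weight w) *\<^sub>R v) \<le> norm w * norm v"
      using mult_right_mono[OF proj_coefficient_bounds(2)[OF v] norm_ge_zero[of v]]
        proj_coefficient_bounds(1)[OF v, of w]
      by (simp only: norm_scaleR abs_of_nonneg)
  qed
  finally show ?thesis
    by (simp add: sum_distrib_left mult.commute)
qed

lemma continuous_on_proj: "continuous_on UNIV proj"
proof -
  interpret i: bounded_linear i by (rule bounded_linear_i)
  have "isCont proj w" for w
  proof (cases "w = 0")
    case False
    have "isCont i x" for x
      by (rule i.isCont) simp
    then show ?thesis
      using total_weight_pos[OF False]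
      unfolding proj_def total_weight_def weight_def
      by (intro continuous_intros) auto
  next
    case True
    have "(proj \<longlongrightarrow> 0) (at 0)"
      by (rule Lim_null_comparison[OF always_eventually[OF allI[OF norm_proj_le]]])
         (auto intro!: tendsto_eq_intros)
    then show ?thesis
      using True by (simp add: isCont_def proj_def)
  qed
  then show ?thesis
    by (simp add: continuous_on_eq_continuous_at)
qed

text \<open>\<open>i w - proj w\<close> is a convex combination of the vectors \<open>i w - \<parallel>w\<parallel> v\<close> with nonzero weight,
  each of which has norm at most \<open>\<delta> \<parallel>w\<parallel>\<close>.\<close>

lemma norm_diff_proj_le: "norm (i w - proj w) \<le> \<delta> * norm w"
proof (cases "w = 0")
  case True
  then show ?thesis
    using bounded_linear_i by (simp add: proj_def linear_simps)
next
  case False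
  define c where "c v = weight v w / total_weight w" for v
  have c_nonneg: "c v \<ge> 0" for v
    using total_weight_pos[OF False] weight_nonneg by (simp add: c_def)
  have sum_c: "(\<Sum>v\<in>V0. c v) = 1"
    using total_weight_pos[OF False] by (simp add: c_def total_weight_def sum_divide_distrib[symmetric])
  have "proj w = (\<Sum>v\<in>V0. c v *\<^sub>R (norm w *\<^sub>R v))"
    by (simp add: proj_def c_def)
  then have "i w - proj w = (\<Sum>v\<in>V0. c v *\<^sub>R i w) - (\<Sum>v\<in>V0. c v *\<^sub>R (norm w *\<^sub>R v))"
    by (simp only: scaleR_sum_left[symmetric] sum_c scaleR_one)
  also have "\<dots> = (\<Sum>v\<in>V0. c v *\<^sub>R (i w - norm w *\<^sub>R v))"
    by (simp add: scaleR_diff_right sum_subtractf)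
  finally have "i w - proj w = (\<Sum>v\<in>V0. c v *\<^sub>R (i w - norm w *\<^sub>R v))" .
  then have "norm (i w - proj w) \<le> (\<Sum>v\<in>V0. c v * norm (i w - norm w *\<^sub>R v))"
    using norm_sum[of "\<lambda>v. c v *\<^sub>R (i w - norm w *\<^sub>R v)" V0] c_nonneg by (simp add: abs_of_nonneg)
  also have "\<dots> \<le> (\<Sum>v\<in>V0. c v * (\<delta> * norm w))"
  proof (intro sum_mono)
    fix v
    show "c v * norm (i w - norm w *\<^sub>R v) \<le> c v * (\<delta> * norm w)"
    proof (cases "weight v w = 0")
      case True
      then show ?thesis by (simp add: c_def)
    next
      case False
      then have "norm (i w - norm w *\<^sub>R v) \<le> \<delta> * norm w"
        by (auto simp: weight_def max_def split: if_splits)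
      then show ?thesis
        using c_nonneg by (rule mult_left_mono)
    qed
  qed
  also have "\<dots> = \<delta> * norm w"
    by (simp add: sum_distrib_right[symmetric] sum_c)
  finally show ?thesis .
qed

end

lemma compact_embedding_finite_rank_approx:
  fixes i :: "'w::real_normed_vector \<Rightarrow> 'v::real_normed_vector"
  assumes "compact_embedding i" and "\<delta> > 0"
  obtains V0 :: "'v set" and F :: "'w \<Rightarrow> 'v" and C :: real
  where "finite V0" "continuous_on UNIV F" "\<And>w. F w \<in> span V0"
    "\<And>w. norm (i w - F w) \<le> \<delta> * norm w" "C \<ge> 0" "\<And>w. norm (F w) \<le> C * norm w"
proof -
  obtain V0 where "finite V0" "\<And>w. w \<noteq> 0 \<Longrightarrow> \<exists>v\<in>V0. norm (i w - norm w *\<^sub>R v) < \<delta> * norm w"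
    using compact_embedding_finite_net[OF assms] by blast
  then interpret schauder_net i \<delta> V0
    using assms(1) by (simp add: schauder_net_def compact_embedding_def)
  show ?thesis
    using that[OF finite_net continuous_on_proj proj_in_span norm_diff_proj_le _ norm_proj_le]
    by (simp add: sum_nonneg)
qed

lemma obtain_powr_mult_le:
  fixes p \<epsilon> M :: real
  assumes "p > 0" "\<epsilon> > 0" "M \<ge> 0"
  obtains \<delta> where "\<delta> > 0" "\<delta> powr p * M \<le> \<epsilon> powr p"
proof
  define \<delta> where "\<delta> = \<epsilon> / (M + 1) powr (1 / p)"
  show "\<delta> > 0"
    using assms by (simp add: \<delta>_def)
  have "\<delta> powr p = \<epsilon> powr p / (M + 1)"
    using assms by (simp add: \<delta>_def powr_divide powr_powr)
  then have "\<delta> powr p * M = \<epsilon> powr p * (M / (M + 1))"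
    by simp
  also have "\<dots> \<le> \<epsilon> powr p"
    using assms by (intro mult_left_le) auto
  finally show "\<delta> powr p * M \<le> \<epsilon> powr p" .
qed

lemma Lpb_compose_bounded_linear:
  fixes i :: "'w::real_normed_vector \<Rightarrow> 'v::real_normed_vector"
  assumes "p \<ge> 0" "bounded_linear i" "Lpb p g"
  shows "Lpb p (\<lambda>t. i (g t))"
proof -
  obtain K where K: "K > 0" "\<And>w. norm (i w) \<le> norm w * K"
    using bounded_linear.pos_bounded[OF assms(2)] by blast
  have "strongly_measurable g"
    using assms(3) by (simp add: Lpb_def)
  then have "strongly_measurable (\<lambda>t. i (g t))"
    using linear_continuous_on[OF assms(2)] by (rule strongly_measurable_compose)
  moreover have "K \<ge> 0" "norm (i (g t)) \<le> K * norm (g t)" for t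
    using K(1) K(2)[of "g t"] by (simp_all add: mult.commute)
  ultimately show ?thesis
    by (rule Lpb_dominated[OF assms(1,3)])
qed

lemma Lpb_compact_embedding_finite_rank_approx:
  fixes i :: "'w::real_normed_vector \<Rightarrow> 'v::real_normed_vector"
  assumes "p > 0" "compact_embedding i" "Lpb p g" "\<epsilon> > 0"
  obtains V0 and F :: "'w \<Rightarrow> 'v" where "finite V0" "Lpb p (\<lambda>t. F (g t))" "\<And>t. F (g t) \<in> span V0"
    "Lpb_pnorm p (\<lambda>t. i (g t) - F (g t)) \<le> ennreal (\<epsilon> powr p)"
proof -
  have p: "p \<ge> 0" using assms(1) by simp
  have g: "strongly_measurable g" "g \<in> borel_measurable lebesgue"
    using assms(3) strongly_measurable_imp_borel_measurable by (auto simp: Lpb_def)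
  obtain M where M: "Lpb_pnorm p g = ennreal M" "M \<ge> 0"
    using assms(3) by (cases "Lpb_pnorm p g") (auto simp: Lpb_def)
  obtain \<delta> where \<delta>: "\<delta> > 0" "\<delta> powr p * M \<le> \<epsilon> powr p"
    using obtain_powr_mult_le[OF assms(1,4) M(2)] by blast
  obtain V0 and F :: "'w \<Rightarrow> 'v" and C where F: "finite V0" "continuous_on UNIV F" "\<And>w. F w \<in> span V0"
    "\<And>w. norm (i w - F w) \<le> \<delta> * norm w" "C \<ge> 0" "\<And>w. norm (F w) \<le> C * norm w"
    using compact_embedding_finite_rank_approx[OF assms(2) \<delta>(1)] by blast
  have LF: "Lpb p (\<lambda>t. F (g t))"
    using strongly_measurable_compose[OF g(1) F(2)] F(5,6) by (rule Lpb_dominated[OF p assms(3)])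
  have "Lpb_pnorm p (\<lambda>t. i (g t) - F (g t)) \<le> ennreal (\<delta> powr p) * ennreal M"
    using Lpb_pnorm_mono[OF p _ g(2) F(4)] \<delta>(1) M(1) by simp
  also have "\<dots> \<le> ennreal (\<epsilon> powr p)"
    using \<delta>(2) M(2) by (simp add: ennreal_mult[symmetric] ennreal_leI)
  finally show ?thesis
    by (rule that[OF F(1) LF F(3)])
qed

theorem proposition2p3:
  fixes i :: "'w::banach \<Rightarrow> 'v::banach" and g :: "real \<Rightarrow> 'w" and p :: real
  assumes "reflexive_space TYPE('v)"
    and "1 < p"
    and "compact_embedding i"
    and "Lpb p g"
  shows "space_regular p (\<lambda>t. i (g t))"
  unfolding space_regular_def
proof (intro conjI allI impI)
  have "bounded_linear i"
    using assms(3) by (simp add: compact_embedding_def)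
  then show "Lpb p (\<lambda>t. i (g t))"
    using assms(2) by (intro Lpb_compose_bounded_linear[OF _ _ assms(4)]) simp_all
  fix \<epsilon> :: real
  assume \<epsilon>: "\<epsilon> > 0"
  have p: "p > 0"
    using assms(2) by simp
  obtain V0 and F :: "'w \<Rightarrow> 'v" where F: "finite V0" "Lpb p (\<lambda>t. F (g t))"
    "\<And>t. F (g t) \<in> span V0" "Lpb_pnorm p (\<lambda>t. i (g t) - F (g t)) \<le> ennreal (\<epsilon> powr p)"
    using Lpb_compact_embedding_finite_rank_approx[OF p assms(3,4) \<epsilon>] by blast
  show "\<exists>S g\<epsilon>. subspace S \<and> (\<exists>B. finite B \<and> S = span B) \<and> Lpb p g\<epsilon> \<and> (\<forall>t. g\<epsilon> t \<in> S) \<and>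
      Lpb_pnorm p (\<lambda>t. i (g t) - g\<epsilon> t) \<le> ennreal (\<epsilon> powr p)"
    using subspace_span F by (intro exI[of _ "span V0"] exI[of _ "\<lambda>t. F (g t)"]) blast
qed

end
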